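(* Let $K$ be a simplicial complex and $K'\subset K$ a subcomplex. Then $K'$ is nice if and only if every simplex $\Delta\in K$ that equals the convex hull of $\Delta\cap K'$ belongs to $K'$.
   Context: A simplicial complex is a locally finite set of linear simplices in $\mathbb{R}^N$ closed under faces with pairwise intersections common faces. For $\Delta\in K$, $\Delta\cap K'$ denotes the subcomplex of $K'$ consisting of the simplices of $K'$ that are faces of $\Delta$ (the maximal subcomplex of $K'$ contained in $\Delta$). Two simplices are adjacent if they share a face; $\operatorname{star}(K')$ is the set of simplices of $K$ adjacent to some simplex of $K'$, together with their faces. $K'$ is nice if for every $\Delta\in\operatorname{star}(K')$, the subcomplex $\Delta\cap K'$ is a (single) face of $\Delta$ together with its faces. *)

theory Defs
  imports "HOL-Analysis.Analysis"
begin

definition is_simplex :: "'a::euclidean_space set \<Rightarrow> bool" where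
  "is_simplex S \<longleftrightarrow> (\<exists>V. finite V \<and> V \<noteq> {} \<and> \<not> affine_dependent V \<and> S = convex hull V)"

definition simplicial_complex :: "'a::euclidean_space set set \<Rightarrow> bool" where
  "simplicial_complex K \<longleftrightarrow>
     (\<forall>S\<in>K. is_simplex S) \<and>
     (\<forall>S\<in>K. \<forall>F. F face_of S \<and> F \<noteq> {} \<longrightarrow> F \<in> K) \<and>
     (\<forall>S\<in>K. \<forall>T\<in>K. S \<inter> T face_of S \<and> S \<inter> T face_of T) \<and>
     (\<forall>x. \<exists>U. open U \<and> x \<in> U \<and> finite {S\<in>K. S \<inter> U \<noteq> {}})"

definition subcomplex :: "'a::euclidean_space set set \<Rightarrow> 'a set set \<Rightarrow> bool" where
  "subcomplex K' K \<longleftrightarrow> K' \<subseteq> K \<and> simplicial_complex K'"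

text \<open>Delta \<inter> K': simplices of K' that are faces of Delta.\<close>
definition simp_restrict :: "'a::euclidean_space set \<Rightarrow> 'a set set \<Rightarrow> 'a set set" where
  "simp_restrict D K' = {G\<in>K'. G face_of D}"

definition adjacent :: "'a::euclidean_space set \<Rightarrow> 'a set \<Rightarrow> bool" where
  "adjacent S T \<longleftrightarrow> (\<exists>F. F \<noteq> {} \<and> F face_of S \<and> F face_of T)"

definition star :: "'a::euclidean_space set set \<Rightarrow> 'a set set \<Rightarrow> 'a set set" where
  "star K K' = {F. F \<noteq> {} \<and> (\<exists>S\<in>K. \<exists>T\<in>K'. adjacent S T \<and> F face_of S)}"

text \<open>Nice: for each Delta in the star, Delta \<inter> K' is a single face F of Delta
  (possibly the empty face) together with its (nonempty) faces.\<close>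
definition nice :: "'a::euclidean_space set set \<Rightarrow> 'a set set \<Rightarrow> bool" where
  "nice K K' \<longleftrightarrow> (\<forall>D\<in>star K K'. \<exists>F. F face_of D \<and>
       simp_restrict D K' = {G. G face_of F \<and> G \<noteq> {}})"

end

theory Submission
  imports Defs
begin

text \<open>The faces of a simplex are the simplices spanned by subsets of its vertex set, so the
  convex hull of any family of faces of \<open>\<Delta>\<close> is again a face of \<open>\<Delta>\<close>. If \<open>K'\<close> is nice and
  \<open>\<Delta> \<inter> K'\<close> is nonempty, then \<open>\<Delta> \<inter> K'\<close> consists of the faces of a single face \<open>F\<close>, whose
  convex hull is \<open>F\<close> itself; hence \<open>\<Delta>\<close> equals that hull only if \<open>\<Delta> = F \<in> K'\<close>. Conversely,
  the hull \<open>F\<close> of \<open>\<Delta> \<inter> K'\<close> is a face of \<open>\<Delta>\<close> with \<open>F \<inter> K' = \<Delta> \<inter> K'\<close>, so the hypothesis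
  gives \<open>F \<in> K'\<close>, and then \<open>\<Delta> \<inter> K'\<close> is exactly the set of faces of \<open>F\<close>.\<close>

lemma is_simplex_nonempty: "is_simplex S \<Longrightarrow> S \<noteq> {}"
  unfolding is_simplex_def by auto

lemma is_simplex_convex: "is_simplex S \<Longrightarrow> convex S"
  unfolding is_simplex_def by auto

lemma simplicial_complex_face_in:
  "\<lbrakk>simplicial_complex K; S \<in> K; F face_of S; F \<noteq> {}\<rbrakk> \<Longrightarrow> F \<in> K"
  unfolding simplicial_complex_def by blast

lemma simplicial_complex_simplex: "\<lbrakk>simplicial_complex K; S \<in> K\<rbrakk> \<Longrightarrow> is_simplex S"
  unfolding simplicial_complex_def by blast

lemma simplicial_complex_nonempty: "\<lbrakk>simplicial_complex K; S \<in> K\<rbrakk> \<Longrightarrow> S \<noteq> {}"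
  using is_simplex_nonempty simplicial_complex_simplex by blast

lemma convex_hull_Union_faces_face_of_simplex:
  assumes "is_simplex D" and faces: "\<forall>G\<in>R. G face_of D"
  shows "convex hull (\<Union>R) face_of D"
proof -
  obtain V where V: "\<not> affine_dependent V" "D = convex hull V"
    using assms(1) unfolding is_simplex_def by blast
  define W where "W = V \<inter> \<Union>R"
  have "\<Union>R \<subseteq> convex hull W"
  proof
    fix x assume "x \<in> \<Union>R"
    then obtain G where G: "G \<in> R" "x \<in> G" by blast
    then obtain c where c: "c \<subseteq> V" "G = convex hull c"
      using faces V face_of_convex_hull_affine_independent by metis
    have "c \<subseteq> W" using c G by (auto simp: W_def hull_inc)
    then show "x \<in> convex hull W" using c G hull_mono by blast
  qed
  then have "convex hull (\<Union>R) = convex hull W"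
    by (metis W_def convex_hull_subset hull_mono inf_le2 subset_antisym)
  moreover have "W \<subseteq> V" by (auto simp: W_def)
  ultimately show ?thesis
    using V face_of_convex_hull_affine_independent by metis
qed

lemma simp_restrict_face_of:
  assumes "F face_of D"
  shows "simp_restrict F K' = {G \<in> simp_restrict D K'. G \<subseteq> F}"
  using face_of_face[OF assms] unfolding simp_restrict_def by auto

lemma starI:
  assumes "D \<in> K" "is_simplex D" and G: "G \<in> simp_restrict D K'" "G \<noteq> {}"
  shows "D \<in> star K K'"
proof -
  have "G face_of D" "G \<in> K'" using G(1) unfolding simp_restrict_def by auto
  then have "adjacent D G"
    unfolding adjacent_def using G(2) face_of_refl face_of_imp_convex by blast
  moreover have "D face_of D" "D \<noteq> {}"
    using assms(2) face_of_refl is_simplex_convex is_simplex_nonempty by auto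
  ultimately show ?thesis
    unfolding star_def using assms(1) \<open>G \<in> K'\<close> by blast
qed

lemma nice_imp_hull_closed:
  assumes K: "simplicial_complex K" and K': "subcomplex K' K" and nice: "nice K K'"
    and D: "D \<in> K" and hull: "D = convex hull (\<Union>(simp_restrict D K'))"
  shows "D \<in> K'"
proof -
  have simplex: "is_simplex D" using K D by (rule simplicial_complex_simplex)
  obtain G where G: "G \<in> simp_restrict D K'"
    using hull is_simplex_nonempty[OF simplex] by fastforce
  have "G \<noteq> {}"
    using G K' simplicial_complex_nonempty unfolding subcomplex_def simp_restrict_def by blast
  then have "D \<in> star K K'"
    using starI[OF D simplex G] by blast
  then obtain F where F: "F face_of D"
    and restrict: "simp_restrict D K' = {G. G face_of F \<and> G \<noteq> {}}"
    using nice unfolding nice_def by blast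
  have "convex F" using F by (rule face_of_imp_convex)
  have "G face_of F" "G \<noteq> {}" using G unfolding restrict by auto
  then have "F \<noteq> {}" using face_of_imp_subset by blast
  then have F_in: "F \<in> simp_restrict D K'"
    using restrict face_of_refl[OF \<open>convex F\<close>] by blast
  have "\<Union>(simp_restrict D K') = F"
    using F_in unfolding restrict by (auto dest: face_of_imp_subset)
  then have "D = F"
    using hull convex_hull_eq[of F] \<open>convex F\<close> by simp
  then show ?thesis using F_in unfolding simp_restrict_def by blast
qed

lemma hull_closed_imp_simp_restrict_eq_faces:
  assumes K: "simplicial_complex K" and K': "subcomplex K' K"
    and closed: "\<forall>D\<in>K. D = convex hull (\<Union>(simp_restrict D K')) \<longrightarrow> D \<in> K'"
    and D: "D \<in> K"
  shows "\<exists>F. F face_of D \<and> simp_restrict D K' = {G. G face_of F \<and> G \<noteq> {}}"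
proof (cases "simp_restrict D K' = {}")
  case True
  then show ?thesis by (intro exI[of _ "{}"]) auto
next
  case False
  define R where "R = simp_restrict D K'"
  define F where "F = convex hull (\<Union>R)"
  have K'_complex: "simplicial_complex K'"
    using K' unfolding subcomplex_def by auto
  have R_sub_F: "G \<subseteq> F" if "G \<in> R" for G
    unfolding F_def using that by (meson Union_upper hull_subset subset_trans)
  have R_nonempty: "G \<noteq> {}" if "G \<in> R" for G
    using that simplicial_complex_nonempty[OF K'_complex] unfolding R_def simp_restrict_def by blast
  have F_face: "F face_of D"
    unfolding F_def using simplicial_complex_simplex[OF K D]
    by (rule convex_hull_Union_faces_face_of_simplex) (simp add: R_def simp_restrict_def)
  obtain G where "G \<in> R" using False unfolding R_def by blast
  then have "F \<noteq> {}" using R_sub_F R_nonempty by blast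
  then have "F \<in> K" using simplicial_complex_face_in[OF K D F_face] by blast
  moreover have restrict_F: "simp_restrict F K' = R"
    using simp_restrict_face_of[OF F_face, of K'] R_sub_F by (auto simp: R_def)
  ultimately have "F \<in> K'" using closed unfolding F_def by metis
  have "G \<in> R" if "G face_of F" "G \<noteq> {}" for G
  proof -
    have "G \<in> K'" using simplicial_complex_face_in[OF K'_complex \<open>F \<in> K'\<close>] that by blast
    then show ?thesis using that restrict_F unfolding simp_restrict_def by blast
  qed
  moreover have "G face_of F \<and> G \<noteq> {}" if "G \<in> R" for G
    using that restrict_F R_nonempty unfolding simp_restrict_def by blast
  ultimately have "R = {G. G face_of F \<and> G \<noteq> {}}" by blast
  then show ?thesis using F_face unfolding R_def by blast
qed

lemma star_subset_complex:
  assumes "simplicial_complex K"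
  shows "star K K' \<subseteq> K"
  using assms simplicial_complex_face_in unfolding star_def by blast

theorem lemma3p10:
  fixes K K' :: "'a::euclidean_space set set"
  assumes "simplicial_complex K" and "subcomplex K' K"
  shows "nice K K' \<longleftrightarrow>
    (\<forall>D\<in>K. D = convex hull (\<Union>(simp_restrict D K')) \<longrightarrow> D \<in> K')"
proof
  show "nice K K' \<Longrightarrow> \<forall>D\<in>K. D = convex hull (\<Union>(simp_restrict D K')) \<longrightarrow> D \<in> K'"
    using nice_imp_hull_closed[OF assms] by blast
next
  assume "\<forall>D\<in>K. D = convex hull (\<Union>(simp_restrict D K')) \<longrightarrow> D \<in> K'"
  then show "nice K K'"
    unfolding nice_def
    using hull_closed_imp_simp_restrict_eq_faces[OF assms] star_subset_complex[OF assms(1)]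
    by blast
qed

end
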